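(* Let $G$ be a group and $A,B\subseteq G$ nonempty finite sets, and let $\epsilon\in(0,1)$. (a) If $\operatorname{VC}^\ell_B(A)\leq d$, then $\operatorname{cov}(B:\operatorname{St}^\ell_\epsilon(A))\leq(30|BA|/(\epsilon|A|))^d$. (b) If $\operatorname{VC}^r_B(A)\leq d$, then $\operatorname{cov}(B^{-1}:\operatorname{St}^r_\epsilon(A))\leq(30|AB|/(\epsilon|A|))^d$.
   Context: $AB=\{ab\}$, $B^{-1}=\{b^{-1}\}$. A set system $\mathcal F$ on $X$ shatters $Y\subseteq X$ if $\{Y\cap S:S\in\mathcal F\}$ is the power set of $Y$; $\operatorname{VC}(\mathcal F)$ is the maximum size of a finite shattered set. $\operatorname{VC}^\ell_B(A)=\operatorname{VC}(\{xA:x\in B\})$, $\operatorname{VC}^r_B(A)=\operatorname{VC}(\{Ax:x\in B\})$. $\operatorname{St}^\ell_\epsilon(A)=\{x:|xA\triangle A|\le\epsilon|A|\}$, $\operatorname{St}^r_\epsilon(A)=\{x:|Ax\triangle A|\le\epsilon|A|\}$. For nonempty $Y,C$ and real $K\ge1$, $\operatorname{cov}(Y:C)\leq K$ means $Y\subseteq FC$ for some $F\subseteq Y$ with $|F|\le K$. *)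

theory Defs
  imports Complex_Main "HOL-Algebra.Coset" "HOL-Library.Extended_Nat"
begin

definition shatters :: "'a set set \<Rightarrow> 'a set \<Rightarrow> bool" where
  "shatters F Y \<longleftrightarrow> (\<lambda>S. Y \<inter> S) ` F = Pow Y"

definition VC :: "'a set \<Rightarrow> 'a set set \<Rightarrow> enat" where
  "VC X F = (SUP Y \<in> {Y. Y \<subseteq> X \<and> finite Y \<and> shatters F Y}. enat (card Y))"

definition VC_l :: "('a, 'b) monoid_scheme \<Rightarrow> 'a set \<Rightarrow> 'a set \<Rightarrow> enat" where
  "VC_l G B A = VC (carrier G) ((\<lambda>x. x <#\<^bsub>G\<^esub> A) ` B)"

definition VC_r :: "('a, 'b) monoid_scheme \<Rightarrow> 'a set \<Rightarrow> 'a set \<Rightarrow> enat" where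
  "VC_r G B A = VC (carrier G) ((\<lambda>x. A #>\<^bsub>G\<^esub> x) ` B)"

definition St_l :: "('a, 'b) monoid_scheme \<Rightarrow> real \<Rightarrow> 'a set \<Rightarrow> 'a set" where
  "St_l G \<epsilon> A = {x \<in> carrier G.
     real (card (((x <#\<^bsub>G\<^esub> A) - A) \<union> (A - (x <#\<^bsub>G\<^esub> A)))) \<le> \<epsilon> * real (card A)}"

definition St_r :: "('a, 'b) monoid_scheme \<Rightarrow> real \<Rightarrow> 'a set \<Rightarrow> 'a set" where
  "St_r G \<epsilon> A = {x \<in> carrier G.
     real (card (((A #>\<^bsub>G\<^esub> x) - A) \<union> (A - (A #>\<^bsub>G\<^esub> x)))) \<le> \<epsilon> * real (card A)}"

definition cov_le :: "('a, 'b) monoid_scheme \<Rightarrow> 'a set \<Rightarrow> 'a set \<Rightarrow> real \<Rightarrow> bool" where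
  "cov_le G Y C K \<longleftrightarrow> (\<exists>F. F \<subseteq> Y \<and> finite F \<and> real (card F) \<le> K \<and> Y \<subseteq> F <#>\<^bsub>G\<^esub> C)"

end

theory Submission
  imports Defs
begin

text \<open>
  The work is done by Haussler's packing lemma: if a family \<open>P\<close> of subsets of a finite set \<open>X\<close>
  has VC dimension at most \<open>d\<close> and its members pairwise differ in more than \<open>\<delta>\<close> points, then
  \<open>card P \<le> (30 card X / \<delta>)^d\<close>. Average over all samples \<open>A \<subseteq> X\<close> of size \<open>k + 1 \<approx> 4 d card X / \<delta>\<close>,
  weighting each vertex of the one-inclusion graph of the trace of \<open>P\<close> on \<open>A\<close> by the size of its
  fiber. Haussler's edge bound caps the total edge weight by \<open>d card P\<close>. On the other hand, for
  \<open>b \<in> A\<close> the fibers of the trace on \<open>A - {b}\<close> are \<open>\<delta>\<close>-separated and differ only outside \<open>A - {b}\<close>,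
  so the edges in direction \<open>b\<close> weigh on average at least \<open>\<delta>/2 (card P - \<Phi>) / card X\<close>, where
  \<open>\<Phi> = sauer_bound d k\<close> bounds the number of fibers. Hence \<open>card P \<le> 2 \<Phi>\<close>, and
  \<open>\<Phi> \<le> (3k/d)^d\<close> gives the constant 30.

  A maximal \<open>\<epsilon> card A\<close>-separated subfamily of the translates \<open>x A\<close>, \<open>x \<in> B\<close>, all lying in \<open>B A\<close>, is
  then a net for them, and \<open>x A\<close> being close to \<open>b A\<close> means \<open>inv x \<otimes> b \<in> St_l G \<epsilon> A\<close>. On the right,
  \<open>A x\<close> close to \<open>A b\<close> means \<open>x \<otimes> inv b \<in> St_r G \<epsilon> A\<close>, which covers \<open>inv b\<close> by \<open>inv x\<close>.
\<close>

section \<open>Shattering and the Sauer-Shelah lemma\<close>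

definition VC_bounded :: "nat \<Rightarrow> 'a set set \<Rightarrow> 'a set \<Rightarrow> bool" where
  "VC_bounded d Q X \<longleftrightarrow> (\<forall>Y. Y \<subseteq> X \<longrightarrow> shatters Q Y \<longrightarrow> card Y \<le> d)"

lemma shatters_mono:
  assumes "P \<subseteq> P'" "shatters P Y"
  shows "shatters P' Y"
  using assms image_mono[OF assms(1), of "\<lambda>S. Y \<inter> S"] unfolding shatters_def by auto

lemma VC_bounded_mono: "P \<subseteq> P' \<Longrightarrow> VC_bounded d P' X \<Longrightarrow> VC_bounded d P X"
  unfolding VC_bounded_def using shatters_mono by blast

lemma VC_le_imp_VC_bounded:
  assumes "VC C F \<le> enat d" "X \<subseteq> C"
  shows "VC_bounded d F X"
  unfolding VC_bounded_def
proof (intro allI impI)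
  fix Y assume Y: "Y \<subseteq> X" "shatters F Y"
  show "card Y \<le> d"
  proof (cases "finite Y")
    case True
    then have "enat (card Y) \<le> VC C F"
      unfolding VC_def using Y assms(2) by (intro SUP_upper) auto
    then show ?thesis using order_trans[OF _ assms(1)] by fastforce
  qed simp
qed

lemma VC_bounded_image:
  assumes "VC_bounded d Q X" "A \<subseteq> X" "\<And>S. S \<in> Q \<Longrightarrow> f S \<inter> A = S \<inter> A"
  shows "VC_bounded d (f ` Q) A"
  unfolding VC_bounded_def
proof (intro allI impI)
  fix Y assume Y: "Y \<subseteq> A" "shatters (f ` Q) Y"
  have "(\<lambda>S. Y \<inter> S) ` f ` Q = (\<lambda>S. Y \<inter> S) ` Q"
    unfolding image_image using Y(1) assms(3) by (intro image_cong) blast+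
  then have "shatters Q Y" using Y(2) unfolding shatters_def by simp
  then show "card Y \<le> d" using assms(1,2) Y(1) unfolding VC_bounded_def by blast
qed

text \<open>The one-inclusion graph of \<open>Q\<close> joins \<open>R\<close> and \<open>insert a R\<close> whenever both lie in \<open>Q\<close>;
  \<open>lower_ends Q a\<close> indexes its edges in direction \<open>a\<close>.\<close>
definition lower_ends :: "'a set set \<Rightarrow> 'a \<Rightarrow> 'a set set" where
  "lower_ends Q a = {R \<in> Q. a \<notin> R \<and> insert a R \<in> Q}"

lemma shatters_insert_lower_ends:
  assumes "shatters (lower_ends Q a) Y"
  shows "shatters Q (insert a Y)"
  unfolding shatters_def
proof (intro equalityI subsetI)
  fix Z assume Z: "Z \<in> Pow (insert a Y)"
  then have "Z - {a} \<in> (\<lambda>S. Y \<inter> S) ` lower_ends Q a"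
    using assms unfolding shatters_def by blast
  then obtain R where R: "R \<in> Q" "a \<notin> R" "insert a R \<in> Q" "Y \<inter> R = Z - {a}"
    unfolding lower_ends_def by blast
  show "Z \<in> (\<lambda>S. insert a Y \<inter> S) ` Q"
  proof (cases "a \<in> Z")
    case True
    then have "Z = insert a Y \<inter> insert a R" using R(4) Z by auto
    then show ?thesis using R(3) by blast
  next
    case False
    then have "Z = insert a Y \<inter> R" using R(2,4) Z by auto
    then show ?thesis using R(1) by blast
  qed
qed auto

lemma VC_bounded_lower_ends:
  assumes "VC_bounded d Q X" "a \<in> X"
  shows "VC_bounded (d - 1) (lower_ends Q a) (X - {a})"
  unfolding VC_bounded_def
proof (intro allI impI)
  fix Y assume Y: "Y \<subseteq> X - {a}" "shatters (lower_ends Q a) Y"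
  have "insert a Y \<subseteq> X" using Y(1) assms(2) by auto
  moreover have "shatters Q (insert a Y)" using Y(2) by (rule shatters_insert_lower_ends)
  ultimately have "card (insert a Y) \<le> d" using assms(1) unfolding VC_bounded_def by blast
  moreover have "a \<notin> Y" using Y(1) by auto
  ultimately show "card Y \<le> d - 1" by (cases "finite Y") auto
qed

lemma lower_ends_eq_empty_if_VC_bounded_0:
  assumes "VC_bounded 0 Q X" "a \<in> X"
  shows "lower_ends Q a = {}"
proof (rule ccontr)
  assume "lower_ends Q a \<noteq> {}"
  then have "shatters (lower_ends Q a) {}" unfolding shatters_def by auto
  then have "shatters Q {a}" using shatters_insert_lower_ends[of Q a "{}"] by simp
  moreover have "{a} \<subseteq> X" using assms(2) by simp
  ultimately have "card {a} \<le> 0" using assms(1) unfolding VC_bounded_def by blast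
  then show False by simp
qed

lemma card_eq_card_delete_plus_card_lower_ends:
  assumes "finite Q"
  shows "card Q = card ((\<lambda>R. R - {a}) ` Q) + card (lower_ends Q a)"
proof -
  define Qo where "Qo = {R \<in> Q. a \<notin> R}"
  define Qi where "Qi = {R \<in> Q. a \<in> R}"
  have fin: "finite Qo" "finite Qi" using assms by (auto simp: Qo_def Qi_def)
  have inj: "inj_on (\<lambda>R. R - {a}) Qi" unfolding Qi_def inj_on_def by blast
  have "(\<lambda>R. R - {a}) ` Qo = Qo" unfolding Qo_def by auto
  then have "(\<lambda>R. R - {a}) ` Q = Qo \<union> (\<lambda>R. R - {a}) ` Qi"
    unfolding Qo_def Qi_def by blast
  moreover have "Qo \<inter> (\<lambda>R. R - {a}) ` Qi = lower_ends Q a"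
  proof (intro equalityI subsetI)
    fix R assume "R \<in> Qo \<inter> (\<lambda>R. R - {a}) ` Qi"
    then obtain S where "R \<in> Q" "a \<notin> R" "S \<in> Q" "a \<in> S" "R = S - {a}"
      unfolding Qo_def Qi_def by auto
    then show "R \<in> lower_ends Q a" unfolding lower_ends_def by (simp add: insert_absorb)
  next
    fix R assume "R \<in> lower_ends Q a"
    then have "R \<in> Qo" "insert a R \<in> Qi" "R = insert a R - {a}"
      unfolding lower_ends_def Qo_def Qi_def by auto
    then show "R \<in> Qo \<inter> (\<lambda>R. R - {a}) ` Qi" by blast
  qed
  moreover have "card Q = card Qo + card Qi"
  proof -
    have "Q = Qo \<union> Qi" "Qo \<inter> Qi = {}" unfolding Qo_def Qi_def by auto
    then show ?thesis using card_Un_disjoint[OF fin] by simp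
  qed
  ultimately show ?thesis
    using card_Un_Int[OF fin(1) finite_imageI[OF fin(2)], of "\<lambda>R. R - {a}"] card_image[OF inj]
    by simp
qed

definition sauer_bound :: "nat \<Rightarrow> nat \<Rightarrow> nat" where
  "sauer_bound d m = (\<Sum>i\<le>d. m choose i)"

lemma sauer_bound_0_left [simp]: "sauer_bound 0 m = 1"
  by (simp add: sauer_bound_def)

lemma sauer_bound_0_right [simp]: "sauer_bound d 0 = 1"
  unfolding sauer_bound_def by (induction d) auto

lemma sauer_bound_Suc_Suc: "sauer_bound (Suc d) (Suc m) = sauer_bound (Suc d) m + sauer_bound d m"
proof -
  have "sauer_bound (Suc d) (Suc m) = 1 + (\<Sum>i\<le>d. Suc m choose Suc i)"
    unfolding sauer_bound_def by (subst sum.atMost_Suc_shift) simp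
  also have "\<dots> = (1 + (\<Sum>i\<le>d. m choose Suc i)) + (\<Sum>i\<le>d. m choose i)"
    by (simp add: sum.distrib)
  also have "1 + (\<Sum>i\<le>d. m choose Suc i) = sauer_bound (Suc d) m"
    unfolding sauer_bound_def by (subst sum.atMost_Suc_shift) simp
  finally show ?thesis by (simp add: sauer_bound_def)
qed

lemma sauer_bound_eq_power_of_two: "m \<le> d \<Longrightarrow> sauer_bound d m = 2 ^ m"
  unfolding sauer_bound_def
  by (subst sum.mono_neutral_right[of "{..d}" "{..m}"]) (auto simp: choose_row_sum)

lemma sauer_bound_le:
  assumes "1 \<le> d" "d \<le> m"
  shows "real (sauer_bound d m) \<le> (3 * real m / real d) ^ d"
proof -
  define t where "t = real d / real m"
  have m0: "real m > 0" using assms by simp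
  have t: "0 < t" "t \<le> 1" unfolding t_def using assms m0 by auto
  have "t ^ d * real (sauer_bound d m) = (\<Sum>i\<le>d. real (m choose i) * t ^ d)"
    unfolding sauer_bound_def of_nat_sum by (simp add: sum_distrib_left mult.commute)
  also have "\<dots> \<le> (\<Sum>i\<le>d. real (m choose i) * t ^ i)"
    by (intro sum_mono mult_left_mono power_decreasing) (use t in auto)
  also have "\<dots> \<le> (\<Sum>i\<le>m. real (m choose i) * t ^ i)"
    by (intro sum_mono2) (use assms t in auto)
  also have "\<dots> = (t + 1) ^ m"
    using binomial_ring[of t 1 m] by simp
  also have "\<dots> \<le> exp t ^ m"
    using exp_ge_add_one_self[of t] t by (intro power_mono) (auto simp: add.commute)
  also have "\<dots> = exp 1 ^ d"
    using m0 by (simp add: t_def flip: exp_of_nat_mult)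
  also have "\<dots> \<le> 3 ^ d" by (intro power_mono exp_le) auto
  finally have "t ^ d * real (sauer_bound d m) \<le> 3 ^ d" .
  then show ?thesis using t m0 assms by (simp add: t_def field_simps power_divide)
qed

theorem sauer_shelah:
  assumes "finite A" "Q \<subseteq> Pow A" "VC_bounded d Q A"
  shows "card Q \<le> sauer_bound d (card A)"
  using assms
proof (induction A arbitrary: d Q rule: finite_induct)
  case empty
  then have "Q \<subseteq> {{}}" by auto
  then show ?case using card_mono[of "{{}}" Q] by simp
next
  case (insert a A)
  have fin: "finite Q" using insert.hyps(1) insert.prems(1) by (meson finite.insertI finite_Pow_iff finite_subset)
  have "card ((\<lambda>R. R - {a}) ` Q) \<le> sauer_bound d (card A)"
    using insert.prems VC_bounded_image[OF insert.prems(2), of A "\<lambda>R. R - {a}"] insert.hyps(2)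
    by (intro insert.IH) auto
  moreover have "card (lower_ends Q a) \<le> sauer_bound (d - 1) (card A)"
    using insert.prems VC_bounded_lower_ends[OF insert.prems(2), of a] insert.hyps(2)
    by (intro insert.IH) (auto simp: lower_ends_def)
  moreover have "d = 0 \<Longrightarrow> lower_ends Q a = {}"
    using insert.prems(2) lower_ends_eq_empty_if_VC_bounded_0[of Q "insert a A" a] by simp
  ultimately show ?case
    using card_eq_card_delete_plus_card_lower_ends[OF fin, of a] insert.hyps
    by (cases d) (auto simp: sauer_bound_Suc_Suc)
qed

section \<open>Edges of the one-inclusion graph\<close>

text \<open>Deleting the coordinate \<open>a\<close> maps the edges of direction \<open>b\<close> at most two-to-one, and the
  images hit twice are exactly the edges of direction \<open>b\<close> among the lower ends in direction \<open>a\<close>.\<close>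
lemma card_lower_ends_le_delete:
  assumes "finite Q" "b \<noteq> a"
  shows "card (lower_ends Q b)
    \<le> card (lower_ends ((\<lambda>R. R - {a}) ` Q) b) + card (lower_ends (lower_ends Q a) b)"
proof -
  define g where "g = (\<lambda>R::'a set. R - {a})"
  define Lo where "Lo = {R \<in> lower_ends Q b. a \<notin> R}"
  define Li where "Li = {R \<in> lower_ends Q b. a \<in> R}"
  have fin: "finite Lo" "finite Li" using assms(1) by (auto simp: Lo_def Li_def lower_ends_def)
  have inj: "inj_on g Li" unfolding Li_def g_def inj_on_def by blast
  have g_insert: "g (insert b R) = insert b (g R)" for R using assms(2) by (auto simp: g_def)
  have "Lo \<union> g ` Li \<subseteq> lower_ends (g ` Q) b"
  proof (intro subsetI)
    fix R assume "R \<in> Lo \<union> g ` Li"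
    then obtain S where S: "S \<in> lower_ends Q b" "R = g S"
      unfolding Lo_def Li_def g_def by auto
    then have "S \<in> Q" "b \<notin> S" "insert b S \<in> Q" unfolding lower_ends_def by auto
    then have "b \<notin> R" "R \<in> g ` Q" "insert b R \<in> g ` Q"
      using S(2) g_insert[of S] by (auto simp: g_def)
    then show "R \<in> lower_ends (g ` Q) b" unfolding lower_ends_def by blast
  qed
  moreover have "Lo \<inter> g ` Li \<subseteq> lower_ends (lower_ends Q a) b"
  proof (intro subsetI)
    fix R assume "R \<in> Lo \<inter> g ` Li"
    then obtain S where R: "R \<in> lower_ends Q b" "a \<notin> R" and S: "S \<in> lower_ends Q b" "a \<in> S" "R = g S"
      unfolding Lo_def Li_def by auto
    have "S = insert a R" "insert b S = insert a (insert b R)"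
      using S unfolding g_def by auto
    then show "R \<in> lower_ends (lower_ends Q a) b"
      using R S(1) assms(2) unfolding lower_ends_def by auto
  qed
  moreover have "card (lower_ends Q b) = card Lo + card Li"
  proof -
    have "lower_ends Q b = Lo \<union> Li" "Lo \<inter> Li = {}" unfolding Lo_def Li_def by auto
    then show ?thesis using card_Un_disjoint[OF fin] by simp
  qed
  moreover have "finite (lower_ends (g ` Q) b)" "finite (lower_ends (lower_ends Q a) b)"
    using assms(1) by (auto simp: lower_ends_def)
  ultimately have "card (lower_ends Q b) \<le> card (lower_ends (g ` Q) b) + card (lower_ends (lower_ends Q a) b)"
    using card_Un_Int[OF fin(1) finite_imageI[OF fin(2)], of g] card_image[OF inj]
      card_mono[of "lower_ends (g ` Q) b" "Lo \<union> g ` Li"]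
      card_mono[of "lower_ends (lower_ends Q a) b" "Lo \<inter> g ` Li"]
    by linarith
  then show ?thesis by (simp only: g_def)
qed

lemma sum_card_lower_ends_le:
  assumes "finite A" "Q \<subseteq> Pow A" "VC_bounded d Q A"
  shows "(\<Sum>b\<in>A. card (lower_ends Q b)) \<le> d * card Q"
  using assms
proof (induction A arbitrary: d Q rule: finite_induct)
  case empty
  then show ?case by simp
next
  case (insert a A)
  define Q1 where "Q1 = (\<lambda>R. R - {a}) ` Q"
  define Q2 where "Q2 = lower_ends Q a"
  have fin: "finite Q" using insert.hyps(1) insert.prems(1) by (meson finite.insertI finite_Pow_iff finite_subset)
  have IH1: "(\<Sum>b\<in>A. card (lower_ends Q1 b)) \<le> d * card Q1"
    using insert.prems VC_bounded_image[OF insert.prems(2), of A "\<lambda>R. R - {a}"] insert.hyps(2)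
    unfolding Q1_def by (intro insert.IH) auto
  have IH2: "(\<Sum>b\<in>A. card (lower_ends Q2 b)) \<le> (d - 1) * card Q2"
    using insert.prems VC_bounded_lower_ends[OF insert.prems(2), of a] insert.hyps(2)
    unfolding Q2_def by (intro insert.IH) (auto simp: lower_ends_def)
  have Q2: "card Q2 + (d - 1) * card Q2 \<le> d * card Q2"
    using insert.prems(2) lower_ends_eq_empty_if_VC_bounded_0[of Q "insert a A" a] unfolding Q2_def
    by (cases d) auto
  have "(\<Sum>b\<in>insert a A. card (lower_ends Q b)) = card Q2 + (\<Sum>b\<in>A. card (lower_ends Q b))"
    using insert.hyps unfolding Q2_def by simp
  also have "\<dots> \<le> card Q2 + (\<Sum>b\<in>A. card (lower_ends Q1 b) + card (lower_ends Q2 b))"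
    using insert.hyps(2) unfolding Q1_def Q2_def
    by (intro add_left_mono sum_mono card_lower_ends_le_delete[OF fin]) auto
  also have "\<dots> \<le> card Q2 + d * card Q1 + (d - 1) * card Q2"
    using IH1 IH2 by (simp add: sum.distrib)
  also have "\<dots> \<le> d * card Q"
    using Q2 card_eq_card_delete_plus_card_lower_ends[OF fin, of a] unfolding Q1_def Q2_def
    by (simp add: algebra_simps)
  finally show ?case .
qed

lemma sum_lower_ends_min_eq:
  fixes w :: "'a set \<Rightarrow> nat"
  assumes "finite Q"
  shows "(\<Sum>b\<in>A. \<Sum>R\<in>lower_ends Q b. min (w R) (w (insert b R)))
    = (\<Sum>b\<in>A. card (lower_ends {R \<in> Q. 0 < w R} b))
      + (\<Sum>b\<in>A. \<Sum>R\<in>lower_ends Q b. min (w R - 1) (w (insert b R) - 1))"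
proof -
  have "(\<Sum>R\<in>lower_ends Q b. min (w R) (w (insert b R)))
      = card (lower_ends {R \<in> Q. 0 < w R} b) + (\<Sum>R\<in>lower_ends Q b. min (w R - 1) (w (insert b R) - 1))"
    for b
  proof -
    have "lower_ends Q b \<inter> {R. 0 < w R \<and> 0 < w (insert b R)} = lower_ends {R \<in> Q. 0 < w R} b"
      unfolding lower_ends_def by auto
    moreover have "finite (lower_ends Q b)" using assms by (simp add: lower_ends_def)
    moreover have "min (w R) (w R') = of_bool (0 < w R \<and> 0 < w R') + min (w R - 1) (w R' - 1)"
      for R R' by auto
    ultimately show ?thesis by (simp add: sum.distrib)
  qed
  then show ?thesis by (simp add: sum.distrib)
qed

lemma weighted_sum_lower_ends_le:
  fixes w :: "'a set \<Rightarrow> nat"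
  assumes "finite A" "Q \<subseteq> Pow A" "VC_bounded d Q A"
  shows "(\<Sum>b\<in>A. \<Sum>R\<in>lower_ends Q b. min (w R) (w (insert b R))) \<le> d * (\<Sum>R\<in>Q. w R)"
proof -
  have fin: "finite Q" using assms(1,2) by (meson finite_Pow_iff finite_subset)
  have "(\<Sum>b\<in>A. \<Sum>R\<in>lower_ends Q b. min (w R) (w (insert b R))) \<le> d * (\<Sum>R\<in>Q. w R)"
    if "\<forall>R\<in>Q. w R \<le> N" for N w
    using that
  proof (induction N arbitrary: w)
    case 0
    then have "\<forall>b. \<forall>R\<in>lower_ends Q b. w R = 0" unfolding lower_ends_def by auto
    then show ?case by simp
  next
    case (Suc N)
    have "(\<Sum>b\<in>A. card (lower_ends {R \<in> Q. 0 < w R} b)) \<le> d * card {R \<in> Q. 0 < w R}"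
      using assms VC_bounded_mono[of "{R \<in> Q. 0 < w R}" Q] by (intro sum_card_lower_ends_le) auto
    moreover have "(\<Sum>b\<in>A. \<Sum>R\<in>lower_ends Q b. min (w R - 1) (w (insert b R) - 1)) \<le> d * (\<Sum>R\<in>Q. w R - 1)"
      using Suc.prems by (intro Suc.IH) auto
    moreover have "(\<Sum>R\<in>Q. w R) = card {R \<in> Q. 0 < w R} + (\<Sum>R\<in>Q. w R - 1)"
    proof -
      have "(\<Sum>R\<in>Q. w R) = (\<Sum>R\<in>Q. of_bool (0 < w R) + (w R - 1))"
        by (intro sum.cong) auto
      then show ?thesis using fin by (simp add: sum.distrib Int_def)
    qed
    ultimately show ?case
      unfolding sum_lower_ends_min_eq[OF fin] by (simp add: algebra_simps)
  qed
  moreover have "\<forall>R\<in>Q. w R \<le> Max (w ` Q)"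
    using fin by simp
  ultimately show ?thesis by blast
qed

section \<open>Haussler's packing lemma\<close>

definition set_dist :: "'a set \<Rightarrow> 'a set \<Rightarrow> nat" where
  "set_dist U V = card ((U - V) \<union> (V - U))"

definition separated :: "real \<Rightarrow> 'a set set \<Rightarrow> bool" where
  "separated \<delta> P \<longleftrightarrow> (\<forall>S\<in>P. \<forall>S'\<in>P. S \<noteq> S' \<longrightarrow> \<delta> < real (set_dist S S'))"

lemma set_dist_commute: "set_dist U V = set_dist V U"
  unfolding set_dist_def by (simp add: Un_commute)

lemma set_dist_self [simp]: "set_dist U U = 0"
  by (simp add: set_dist_def)

lemma set_dist_eq_card_Diff:
  "finite U \<Longrightarrow> finite V \<Longrightarrow> set_dist U V = card (U - V) + card (V - U)"
  unfolding set_dist_def by (intro card_Un_disjoint) auto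

lemma set_dist_image:
  assumes "inj_on f (U \<union> V)"
  shows "set_dist (f ` U) (f ` V) = set_dist U V"
proof -
  have "f ` U - f ` V = f ` (U - V)" "f ` V - f ` U = f ` (V - U)"
    using inj_on_image_set_diff[OF assms] by auto
  then have "(f ` U - f ` V) \<union> (f ` V - f ` U) = f ` ((U - V) \<union> (V - U))"
    by (simp add: image_Un)
  moreover have "inj_on f ((U - V) \<union> (V - U))"
    using assms by (rule inj_on_subset) auto
  ultimately show ?thesis unfolding set_dist_def by (simp add: card_image)
qed

lemma separated_subset: "separated \<delta> P \<Longrightarrow> P' \<subseteq> P \<Longrightarrow> separated \<delta> P'"
  unfolding separated_def by blast

lemma sum_card_Diff_ge_separated:
  assumes "finite C" "\<And>S. S \<in> C \<Longrightarrow> finite S" "separated \<delta> C" "0 \<le> \<delta>"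
  shows "real (card C) * (real (card C) - 1) * \<delta> \<le> 2 * real (\<Sum>S\<in>C. \<Sum>S'\<in>C. card (S' - S))"
proof -
  have row: "(real (card C) - 1) * \<delta> \<le> (\<Sum>S'\<in>C. real (set_dist S S'))" if "S \<in> C" for S
  proof -
    have "0 < card C" using that assms(1) card_gt_0_iff by blast
    then have "(real (card C) - 1) * \<delta> = (\<Sum>S'\<in>C - {S}. \<delta>)"
      using that assms(1) by (simp add: card_Diff_singleton of_nat_diff)
    also have "\<dots> \<le> (\<Sum>S'\<in>C - {S}. real (set_dist S S'))"
      using assms(3) that unfolding separated_def by (intro sum_mono) (auto intro: less_imp_le)
    also have "\<dots> \<le> (\<Sum>S'\<in>C. real (set_dist S S'))"
      using assms(1) by (intro sum_mono2) auto
    finally show ?thesis .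
  qed
  have "real (card C) * (real (card C) - 1) * \<delta> = (\<Sum>S\<in>C. (real (card C) - 1) * \<delta>)"
    by simp
  also have "\<dots> \<le> (\<Sum>S\<in>C. \<Sum>S'\<in>C. real (set_dist S S'))"
    using row by (rule sum_mono)
  also have "\<dots> = real (\<Sum>S\<in>C. \<Sum>S'\<in>C. card (S - S')) + real (\<Sum>S\<in>C. \<Sum>S'\<in>C. card (S' - S))"
    using assms(2) by (simp add: set_dist_eq_card_Diff sum.distrib cong: sum.cong)
  also have "(\<Sum>S\<in>C. \<Sum>S'\<in>C. card (S - S')) = (\<Sum>S\<in>C. \<Sum>S'\<in>C. card (S' - S))"
    by (rule sum.swap)
  finally show ?thesis by simp
qed

text \<open>Both sides count the triples \<open>(b, S, S')\<close> with \<open>b \<in> S' - S\<close>.\<close>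
lemma sum_card_split_eq:
  assumes "finite C" "finite D" "\<And>S S'. S \<in> C \<Longrightarrow> S' \<in> C \<Longrightarrow> S' - S \<subseteq> D"
  shows "(\<Sum>b\<in>D. card {S\<in>C. b \<notin> S} * card {S\<in>C. b \<in> S}) = (\<Sum>S\<in>C. \<Sum>S'\<in>C. card (S' - S))"
proof -
  have card_eq: "card {S\<in>C. P S} = (\<Sum>S\<in>C. of_bool (P S))" for P
    using assms(1) by (simp add: Int_def)
  have "(\<Sum>b\<in>D. card {S\<in>C. b \<notin> S} * card {S\<in>C. b \<in> S})
      = (\<Sum>b\<in>D. \<Sum>S\<in>C. \<Sum>S'\<in>C. of_bool (b \<in> S' - S))"
    unfolding card_eq sum_product by (intro sum.cong refl) auto
  also have "\<dots> = (\<Sum>S\<in>C. \<Sum>b\<in>D. \<Sum>S'\<in>C. of_bool (b \<in> S' - S))"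
    by (rule sum.swap)
  also have "\<dots> = (\<Sum>S\<in>C. \<Sum>S'\<in>C. \<Sum>b\<in>D. of_bool (b \<in> S' - S))"
    by (intro sum.cong refl sum.swap)
  also have "\<dots> = (\<Sum>S\<in>C. \<Sum>S'\<in>C. card (S' - S))"
  proof (intro sum.cong refl)
    fix S S' assume "S \<in> C" "S' \<in> C"
    then have "D \<inter> {b. b \<in> S' - S} = S' - S" using assms(3) by blast
    then show "(\<Sum>b\<in>D. of_bool (b \<in> S' - S)) = card (S' - S)"
      using assms(2) by simp
  qed
  finally show ?thesis .
qed

lemma mult_div_add_le_min: "real x * real y / real (x + y) \<le> real (min x y)"
proof (cases "x \<le> y")
  case True
  then have "real x * real y \<le> real x * real (x + y)" by (intro mult_left_mono) auto
  then show ?thesis using True by (cases "x + y = 0") (auto simp: divide_le_eq)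
next
  case False
  have "real y * real x \<le> real y * real (x + y)" by (intro mult_left_mono) auto
  then have "real x * real y \<le> real y * real (x + y)" by (simp add: mult.commute)
  then show ?thesis using False by (cases "x + y = 0") (auto simp: divide_le_eq)
qed

lemma separated_sum_min_split_ge:
  assumes "finite C" "finite D" "\<And>S. S \<in> C \<Longrightarrow> finite S" "separated \<delta> C" "0 \<le> \<delta>"
    "\<And>S S'. S \<in> C \<Longrightarrow> S' \<in> C \<Longrightarrow> S' - S \<subseteq> D"
  shows "\<delta> / 2 * (real (card C) - 1)
    \<le> (\<Sum>b\<in>D. real (min (card {S\<in>C. b \<notin> S}) (card {S\<in>C. b \<in> S})))"
proof (cases "C = {}")
  case True
  then show ?thesis using assms(5) by simp
next
  case False
  then have C: "0 < real (card C)" using assms(1) by (simp add: card_gt_0_iff)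
  have split: "card {S\<in>C. b \<notin> S} + card {S\<in>C. b \<in> S} = card C" for b
    using assms(1) by (subst card_Un_disjoint[symmetric]) (auto intro: arg_cong[where f = card])
  have "\<delta> / 2 * (real (card C) - 1) = real (card C) * (real (card C) - 1) * \<delta> / 2 / real (card C)"
    using C by simp
  also have "\<dots> \<le> real (\<Sum>S\<in>C. \<Sum>S'\<in>C. card (S' - S)) / real (card C)"
    using sum_card_Diff_ge_separated[OF assms(1,3,4,5)] C by (intro divide_right_mono) auto
  also have "\<dots> = (\<Sum>b\<in>D. real (card {S\<in>C. b \<notin> S}) * real (card {S\<in>C. b \<in> S})) / real (card C)"
    using arg_cong[OF sum_card_split_eq[OF assms(1,2,6)], of real] by simp
  also have "\<dots> = (\<Sum>b\<in>D. real (card {S\<in>C. b \<notin> S}) * real (card {S\<in>C. b \<in> S})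
      / real (card {S\<in>C. b \<notin> S} + card {S\<in>C. b \<in> S}))"
    unfolding split sum_divide_distrib ..
  also have "\<dots> \<le> (\<Sum>b\<in>D. real (min (card {S\<in>C. b \<notin> S}) (card {S\<in>C. b \<in> S})))"
    by (intro sum_mono mult_div_add_le_min)
  finally show ?thesis .
qed

definition trace_on :: "'a set set \<Rightarrow> 'a set \<Rightarrow> 'a set set" where
  "trace_on P A = (\<lambda>S. S \<inter> A) ` P"

definition fiber :: "'a set set \<Rightarrow> 'a set \<Rightarrow> 'a set \<Rightarrow> 'a set set" where
  "fiber P A R = {S \<in> P. S \<inter> A = R}"

text \<open>For a sample \<open>A\<close> and a new point \<open>b\<close>: the total weight of the edges in direction \<open>b\<close> of the
  one-inclusion graph of \<open>trace_on P (insert b A)\<close>, each vertex weighted by the size of its fiber.\<close>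
definition split_weight :: "'a set set \<Rightarrow> 'a set \<Rightarrow> 'a \<Rightarrow> nat" where
  "split_weight P A b =
     (\<Sum>R\<in>Pow A. min (card {S \<in> fiber P A R. b \<notin> S}) (card {S \<in> fiber P A R. b \<in> S}))"

lemma VC_bounded_trace_on: "VC_bounded d P X \<Longrightarrow> A \<subseteq> X \<Longrightarrow> VC_bounded d (trace_on P A) A"
  unfolding trace_on_def by (rule VC_bounded_image) auto

lemma trace_on_subset_Pow: "trace_on P A \<subseteq> Pow A"
  unfolding trace_on_def by auto

lemma fiber_eq_empty_iff: "fiber P A R = {} \<longleftrightarrow> R \<notin> trace_on P A"
  unfolding fiber_def trace_on_def by auto

lemma sum_card_fiber: "finite P \<Longrightarrow> (\<Sum>R\<in>trace_on P A. card (fiber P A R)) = card P"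
  unfolding trace_on_def fiber_def using sum.image_gen[of P "\<lambda>_. 1::nat" "\<lambda>S. S \<inter> A"] by simp

lemma sum_split_weight_ge:
  assumes "finite X" "P \<subseteq> Pow X" "A \<subseteq> X" "separated \<delta> P" "0 \<le> \<delta>"
  shows "\<delta> / 2 * (real (card P) - real (card (trace_on P A)))
    \<le> real (\<Sum>b\<in>X - A. split_weight P A b)"
proof -
  define m where "m R b = real (min (card {S \<in> fiber P A R. b \<notin> S}) (card {S \<in> fiber P A R. b \<in> S}))"
    for R b
  have fin: "finite P" "finite (trace_on P A)" "finite (Pow A)"
    using assms(1-3) finite_subset unfolding trace_on_def by (auto intro: finite_subset)
  have "real (card P) - real (card (trace_on P A)) = (\<Sum>R\<in>trace_on P A. real (card (fiber P A R)) - 1)"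
    using arg_cong[OF sum_card_fiber[OF fin(1), of A], of real] by (simp add: sum_subtractf)
  then have "\<delta> / 2 * (real (card P) - real (card (trace_on P A)))
      = (\<Sum>R\<in>trace_on P A. \<delta> / 2 * (real (card (fiber P A R)) - 1))"
    by (simp only: sum_distrib_left)
  also have "\<dots> \<le> (\<Sum>R\<in>trace_on P A. \<Sum>b\<in>X - A. m R b)"
  proof (intro sum_mono)
    fix R
    have "S' - S \<subseteq> X - A" if "S \<in> fiber P A R" "S' \<in> fiber P A R" for S S'
      using that assms(2) unfolding fiber_def by blast
    moreover have "separated \<delta> (fiber P A R)"
      using assms(4) by (rule separated_subset) (auto simp: fiber_def)
    ultimately show "\<delta> / 2 * (real (card (fiber P A R)) - 1) \<le> (\<Sum>b\<in>X - A. m R b)"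
      unfolding m_def using fin assms(1,2,5) finite_subset[of _ X]
      by (intro separated_sum_min_split_ge) (auto simp: fiber_def)
  qed
  also have "\<dots> \<le> (\<Sum>R\<in>Pow A. \<Sum>b\<in>X - A. m R b)"
    using fin trace_on_subset_Pow by (intro sum_mono2) (auto simp: m_def intro: sum_nonneg)
  also have "\<dots> = real (\<Sum>b\<in>X - A. split_weight P A b)"
    unfolding split_weight_def m_def of_nat_sum by (rule sum.swap)
  finally show ?thesis .
qed

lemma split_weight_Diff_eq:
  assumes "b \<in> A"
  shows "split_weight P (A - {b}) b
    = (\<Sum>R\<in>Pow (A - {b}). min (card (fiber P A R)) (card (fiber P A (insert b R))))"
  unfolding split_weight_def
proof (intro sum.cong refl)
  fix R assume "R \<in> Pow (A - {b})"
  then have "{S \<in> fiber P (A - {b}) R. b \<notin> S} = fiber P A R"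
    "{S \<in> fiber P (A - {b}) R. b \<in> S} = fiber P A (insert b R)"
    using assms unfolding fiber_def by auto
  then show "min (card {S \<in> fiber P (A - {b}) R. b \<notin> S}) (card {S \<in> fiber P (A - {b}) R. b \<in> S})
    = min (card (fiber P A R)) (card (fiber P A (insert b R)))" by simp
qed

lemma sum_split_weight_le:
  assumes "finite X" "P \<subseteq> Pow X" "VC_bounded d P X" "A \<subseteq> X"
  shows "(\<Sum>b\<in>A. split_weight P (A - {b}) b) \<le> d * card P"
proof -
  define w where "w R = card (fiber P A R)" for R
  have fin: "finite A" "finite P" using assms(1,2,4) by (auto intro: finite_subset)
  have edges: "split_weight P (A - {b}) b = (\<Sum>R\<in>lower_ends (trace_on P A) b. min (w R) (w (insert b R)))"
    if "b \<in> A" for b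
    unfolding split_weight_Diff_eq[OF that] w_def[symmetric]
  proof (rule sum.mono_neutral_right)
    show "finite (Pow (A - {b}))" using fin(1) by simp
    show "lower_ends (trace_on P A) b \<subseteq> Pow (A - {b})"
      using trace_on_subset_Pow[of P A] unfolding lower_ends_def by auto
    show "\<forall>R\<in>Pow (A - {b}) - lower_ends (trace_on P A) b. min (w R) (w (insert b R)) = 0"
    proof
      fix R assume "R \<in> Pow (A - {b}) - lower_ends (trace_on P A) b"
      then have "fiber P A R = {} \<or> fiber P A (insert b R) = {}"
        unfolding lower_ends_def fiber_eq_empty_iff by auto
      then show "min (w R) (w (insert b R)) = 0" unfolding w_def by auto
    qed
  qed
  have "(\<Sum>b\<in>A. split_weight P (A - {b}) b) = (\<Sum>b\<in>A. \<Sum>R\<in>lower_ends (trace_on P A) b. min (w R) (w (insert b R)))"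
    using edges by (rule sum.cong[OF refl])
  also have "\<dots> \<le> d * (\<Sum>R\<in>trace_on P A. w R)"
    using fin(1) trace_on_subset_Pow VC_bounded_trace_on[OF assms(3,4)]
    by (rule weighted_sum_lower_ends_le)
  also have "(\<Sum>R\<in>trace_on P A. w R) = card P"
    unfolding w_def using fin(2) by (rule sum_card_fiber)
  finally show ?thesis .
qed

lemma sum_subsets_Suc_remove_eq:
  assumes "finite X"
  shows "(\<Sum>A\<in>{A. A \<subseteq> X \<and> card A = Suc k}. \<Sum>b\<in>A. g (A - {b}) b)
       = (\<Sum>A\<in>{A. A \<subseteq> X \<and> card A = k}. \<Sum>b\<in>X - A. g A b)"
proof -
  have fin: "finite {A. A \<subseteq> X \<and> card A = j}" "\<forall>A\<in>{A. A \<subseteq> X \<and> card A = j}. finite A" for j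
    using assms by (auto intro: finite_subset)
  have "(\<Sum>A\<in>{A. A \<subseteq> X \<and> card A = Suc k}. \<Sum>b\<in>A. g (A - {b}) b)
      = (\<Sum>(A, b)\<in>(SIGMA A:{A. A \<subseteq> X \<and> card A = Suc k}. A). g (A - {b}) b)"
    using fin by (rule sum.Sigma)
  also have "\<dots> = (\<Sum>(A, b)\<in>(SIGMA A:{A. A \<subseteq> X \<and> card A = k}. X - A). g A b)"
  proof (rule sum.reindex_bij_witness[where j = "\<lambda>(A, b). (A - {b}, b)" and i = "\<lambda>(A, b). (insert b A, b)"])
    show "(\<lambda>(A, b). (A - {b}, b)) e \<in> (SIGMA A:{A. A \<subseteq> X \<and> card A = k}. X - A)"
      if "e \<in> (SIGMA A:{A. A \<subseteq> X \<and> card A = Suc k}. A)" for e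
      using that by (auto simp: card_Diff_singleton)
    show "(\<lambda>(A, b). (insert b A, b)) e \<in> (SIGMA A:{A. A \<subseteq> X \<and> card A = Suc k}. A)"
      if "e \<in> (SIGMA A:{A. A \<subseteq> X \<and> card A = k}. X - A)" for e
      using that assms by (auto simp: finite_subset)
  qed auto
  also have "\<dots> = (\<Sum>A\<in>{A. A \<subseteq> X \<and> card A = k}. \<Sum>b\<in>X - A. g A b)"
    using fin(1) assms by (subst sum.Sigma) auto
  finally show ?thesis .
qed

text \<open>Haussler's averaging argument, with the random sample replaced by an average over all
  samples of size \<open>Suc k\<close>.\<close>
lemma separated_averaging:
  assumes "finite X" "P \<subseteq> Pow X" "VC_bounded d P X" "separated \<delta> P" "0 \<le> \<delta>" "k < card X"
  shows "real (Suc k) * (\<delta> / 2 * (real (card P) - real (sauer_bound d k)))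
    \<le> real (card X - k) * (real d * real (card P))"
proof -
  define n where "n = card X"
  define L where "L = \<delta> / 2 * (real (card P) - real (sauer_bound d k))"
  have "real (n choose k) * L = (\<Sum>A\<in>{A. A \<subseteq> X \<and> card A = k}. L)"
    using n_subsets[OF assms(1)] by (simp add: n_def)
  also have "\<dots> \<le> (\<Sum>A\<in>{A. A \<subseteq> X \<and> card A = k}. real (\<Sum>b\<in>X - A. split_weight P A b))"
  proof (rule sum_mono)
    fix A assume "A \<in> {A. A \<subseteq> X \<and> card A = k}"
    then have A: "A \<subseteq> X" "card A = k" "finite A" using assms(1) finite_subset by auto
    have "card (trace_on P A) \<le> sauer_bound d k"
      using sauer_shelah[OF A(3) trace_on_subset_Pow VC_bounded_trace_on[OF assms(3) A(1)]] A(2)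
      by simp
    then have "L \<le> \<delta> / 2 * (real (card P) - real (card (trace_on P A)))"
      unfolding L_def using assms(5) by (intro mult_left_mono) auto
    also have "\<dots> \<le> real (\<Sum>b\<in>X - A. split_weight P A b)"
      using assms(1,2) A(1) assms(4,5) by (rule sum_split_weight_ge)
    finally show "L \<le> real (\<Sum>b\<in>X - A. split_weight P A b)" .
  qed
  also have "\<dots> = real (\<Sum>A\<in>{A. A \<subseteq> X \<and> card A = Suc k}. \<Sum>b\<in>A. split_weight P (A - {b}) b)"
    by (simp add: sum_subsets_Suc_remove_eq[OF assms(1)] flip: of_nat_sum)
  also have "\<dots> \<le> real (\<Sum>A\<in>{A. A \<subseteq> X \<and> card A = Suc k}. d * card P)"
    using sum_split_weight_le[OF assms(1-3)] by (intro of_nat_mono sum_mono) auto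
  also have "\<dots> = real (n choose Suc k) * (real d * real (card P))"
    using n_subsets[OF assms(1)] by (simp add: n_def)
  finally have main: "real (n choose k) * L \<le> real (n choose Suc k) * (real d * real (card P))" .
  have "Suc k * (n choose Suc k) = (n - k) * (n choose k)"
    using binomial_absorption[of k n] binomial_absorb_comp[of n k] by simp
  then have "real (Suc k) * real (n choose Suc k) = real (n - k) * real (n choose k)"
    by (metis of_nat_mult)
  then have "real (n choose k) * (real (Suc k) * L) \<le> real (n choose k) * (real (n - k) * (real d * real (card P)))"
    using mult_left_mono[OF main, of "real (Suc k)"] by (simp add: algebra_simps)
  moreover have "0 < real (n choose k)" using assms(6) by (simp add: n_def)
  ultimately show ?thesis by (simp add: L_def n_def)
qed

lemma separated_card_le_twice_sauer_bound:
  assumes "finite X" "P \<subseteq> Pow X" "VC_bounded d P X" "separated \<delta> P" "0 < \<delta>" "k < card X"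
    and sample: "4 * real d * real (card X) \<le> real (Suc k) * \<delta>"
  shows "real (card P) \<le> 2 * real (sauer_bound d k)"
proof -
  define c where "c = real (Suc k) * \<delta> / 4"
  have c: "0 < c" using assms(5) by (simp add: c_def)
  have "c * (2 * (real (card P) - real (sauer_bound d k)))
      = real (Suc k) * (\<delta> / 2 * (real (card P) - real (sauer_bound d k)))"
    by (simp add: c_def)
  also have "\<dots> \<le> real (card X - k) * (real d * real (card P))"
    using assms(5) by (intro separated_averaging[OF assms(1-4) _ assms(6)]) simp
  also have "\<dots> \<le> real (card X) * real d * real (card P)"
    using mult_right_mono[of "real (card X - k)" "real (card X)" "real d * real (card P)"]
    by (simp add: mult.assoc)
  also have "\<dots> \<le> c * real (card P)"
    using mult_right_mono[OF sample, of "real (card P)"] by (simp add: c_def algebra_simps)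
  finally show ?thesis using c by (simp only: mult_le_cancel_left_pos) simp
qed

lemma sauer_bound_le_packing_bound:
  assumes "1 \<le> d" "0 < \<delta>" "\<delta> < real m" "\<delta> \<le> 4 * real d"
  shows "real (sauer_bound d m) \<le> (30 * real m / \<delta>) ^ d"
proof (cases "d \<le> m")
  case True
  have "real (sauer_bound d m) \<le> (3 * real m / real d) ^ d"
    by (rule sauer_bound_le[OF assms(1) True])
  also have "\<dots> \<le> (30 * real m / \<delta>) ^ d"
  proof (rule power_mono)
    have "real m * (3 * \<delta>) \<le> real m * (30 * real d)"
      using assms(4) by (intro mult_left_mono) auto
    then show "3 * real m / real d \<le> 30 * real m / \<delta>"
      using assms(1,2) by (simp add: field_simps)
  qed simp
  finally show ?thesis .
next
  case False
  then have "real (sauer_bound d m) = 2 ^ m" by (simp add: sauer_bound_eq_power_of_two)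
  also have "\<dots> \<le> 2 ^ d" using False by (intro power_increasing) auto
  also have "\<dots> \<le> (30 * real m / \<delta>) ^ d"
    using assms(2,3) by (intro power_mono) (auto simp: field_simps)
  finally show ?thesis .
qed

lemma twice_sauer_bound_le_packing_bound:
  assumes "1 \<le> d" "d \<le> k" "0 < \<delta>" "real k \<le> 4 * real d * real m / \<delta>"
  shows "2 * real (sauer_bound d k) \<le> (30 * real m / \<delta>) ^ d"
proof -
  have "2 * real (sauer_bound d k) \<le> 2 * (3 * real k / real d) ^ d"
    using sauer_bound_le[OF assms(1,2)] by simp
  also have "\<dots> \<le> 2 * (12 * (real m / \<delta>)) ^ d"
  proof (intro mult_left_mono power_mono)
    have "3 * real k / real d \<le> 3 * (4 * real d * real m / \<delta>) / real d"
      using assms(4) by (intro divide_right_mono) auto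
    then show "3 * real k / real d \<le> 12 * (real m / \<delta>)" using assms(1) by simp
  qed auto
  also have "\<dots> \<le> (5 / 2) ^ d * (12 * (real m / \<delta>)) ^ d"
    using power_increasing[of 1 d "5 / 2 :: real"] assms(1,3) by (intro mult_right_mono) auto
  also have "\<dots> = (30 * real m / \<delta>) ^ d"
    by (simp flip: power_mult_distrib)
  finally show ?thesis .
qed

theorem haussler_packing:
  assumes "finite X" "P \<subseteq> Pow X" "VC_bounded d P X" "separated \<delta> P" "0 < \<delta>" "\<delta> < real (card X)"
  shows "real (card P) \<le> (30 * real (card X) / \<delta>) ^ d"
proof (cases "d = 0")
  case True
  then show ?thesis using sauer_shelah[OF assms(1-3)] by simp
next
  case False
  define n where "n = card X"
  define k where "k = nat \<lfloor>4 * real d * real n / \<delta>\<rfloor>"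
  have ratio: "1 < real n / \<delta>" using assms(5,6) by (simp add: n_def)
  have "0 \<le> 4 * real d * real n / \<delta>" using assms(5) by simp
  then have k: "real k \<le> 4 * real d * real n / \<delta>" "4 * real d * real n / \<delta> < real (Suc k)"
    unfolding k_def by linarith+
  show ?thesis
  proof (cases "k < n")
    case True
    have "4 * real d * 1 \<le> 4 * real d * (real n / \<delta>)"
      using ratio by (intro mult_left_mono) auto
    then have "real (4 * d) < real (Suc k)" using k(2) by simp
    then have "d \<le> k" by linarith
    have "4 * real d * real n < real (Suc k) * \<delta>"
      using k(2) assms(5) by (simp add: divide_less_eq)
    then have "real (card P) \<le> 2 * real (sauer_bound d k)"
      using True unfolding n_def by (intro separated_card_le_twice_sauer_bound[OF assms(1-5)]) auto
    also have "\<dots> \<le> (30 * real n / \<delta>) ^ d"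
      using False \<open>d \<le> k\<close> assms(5) k(1) by (intro twice_sauer_bound_le_packing_bound) auto
    finally show ?thesis by (simp add: n_def)
  next
    case False
    then have "real n \<le> 4 * real d * real n / \<delta>" using k(1) by linarith
    then have "real n * \<delta> \<le> real n * (4 * real d)"
      using assms(5) by (simp add: le_divide_eq algebra_simps)
    then have "\<delta> \<le> 4 * real d"
      using ratio assms(5) by (simp add: mult_le_cancel_left_pos)
    then have "real (sauer_bound d n) \<le> (30 * real n / \<delta>) ^ d"
      using \<open>d \<noteq> 0\<close> assms(5,6) by (intro sauer_bound_le_packing_bound) (auto simp: n_def)
    then show ?thesis
      using sauer_shelah[OF assms(1-3)] unfolding n_def by (meson of_nat_mono order_trans)
  qed
qed

section \<open>Nets from maximal separated subfamilies\<close>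

lemma maximal_separated_subset:
  assumes "finite F" "0 \<le> \<delta>"
  obtains S where "S \<subseteq> F" "separated \<delta> S" "\<And>Q. Q \<in> F \<Longrightarrow> \<exists>U\<in>S. real (set_dist U Q) \<le> \<delta>"
proof -
  have "{S. S \<subseteq> F \<and> separated \<delta> S} \<subseteq> Pow F" by blast
  then have "finite {S. S \<subseteq> F \<and> separated \<delta> S}"
    using assms(1) by (rule finite_subset[OF _ finite_Pow_iff[THEN iffD2]])
  moreover have "{S. S \<subseteq> F \<and> separated \<delta> S} \<noteq> {}"
    using empty_subsetI[of F] by (auto simp: separated_def)
  ultimately obtain S where "S \<in> {S. S \<subseteq> F \<and> separated \<delta> S}"
    and max: "\<forall>S'\<in>{S. S \<subseteq> F \<and> separated \<delta> S}. S \<subseteq> S' \<longrightarrow> S = S'"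
    by (blast dest: finite_has_maximal)
  then have S: "S \<subseteq> F" "separated \<delta> S"
    and maximal: "\<And>S'. S' \<subseteq> F \<Longrightarrow> separated \<delta> S' \<Longrightarrow> S \<subseteq> S' \<Longrightarrow> S = S'"
    by auto
  have "\<exists>U\<in>S. real (set_dist U Q) \<le> \<delta>" if "Q \<in> F" for Q
  proof (rule ccontr)
    assume "\<not> (\<exists>U\<in>S. real (set_dist U Q) \<le> \<delta>)"
    then have far: "\<delta> < real (set_dist U Q)" "\<delta> < real (set_dist Q U)" if "U \<in> S" for U
      using that set_dist_commute[of Q U] by auto
    then have "Q \<notin> S" using assms(2) by force
    have "separated \<delta> (insert Q S)"
      using S(2) far unfolding separated_def by blast
    then have "S = insert Q S" using S(1) that by (intro maximal) auto
    with \<open>Q \<notin> S\<close> show False by blast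
  qed
  with S show ?thesis by (rule that)
qed

theorem haussler_cover:
  fixes T :: "'i \<Rightarrow> 'a set"
  assumes "finite B" "finite X" "\<And>b. b \<in> B \<Longrightarrow> T b \<subseteq> X" "VC_bounded d (T ` B) X"
    "0 < \<delta>" "\<delta> < real (card X)"
  obtains F where "F \<subseteq> B" "real (card F) \<le> (30 * real (card X) / \<delta>) ^ d"
    "\<And>b. b \<in> B \<Longrightarrow> \<exists>x\<in>F. real (set_dist (T x) (T b)) \<le> \<delta>"
proof -
  obtain S where S: "S \<subseteq> T ` B" "separated \<delta> S"
    and near: "\<And>Q. Q \<in> T ` B \<Longrightarrow> \<exists>U\<in>S. real (set_dist U Q) \<le> \<delta>"
    using maximal_separated_subset[of "T ` B" \<delta>] assms(1,5) by auto
  obtain F where F: "F \<subseteq> B" "inj_on T F" "S = T ` F"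
    using S(1) subset_image_inj by metis
  have "S \<subseteq> Pow X" using S(1) assms(3) by blast
  then have "real (card S) \<le> (30 * real (card X) / \<delta>) ^ d"
    using assms(2,5,6) S(2) VC_bounded_mono[OF S(1) assms(4)] by (intro haussler_packing)
  then show ?thesis
    using that[OF F(1)] near F(3) card_image[OF F(2)] by auto
qed

corollary haussler_cover_fraction:
  fixes T :: "'i \<Rightarrow> 'a set"
  assumes "finite B" "B \<noteq> {}" "finite X" "\<And>b. b \<in> B \<Longrightarrow> T b \<subseteq> X" "VC_bounded d (T ` B) X"
    "\<And>b. b \<in> B \<Longrightarrow> card (T b) = m" "0 < m" "0 < \<epsilon>" "\<epsilon> < 1"
  obtains F where "F \<subseteq> B" "real (card F) \<le> (30 * real (card X) / (\<epsilon> * real m)) ^ d"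
    "\<And>b. b \<in> B \<Longrightarrow> \<exists>x\<in>F. real (set_dist (T x) (T b)) \<le> \<epsilon> * real m"
proof (rule haussler_cover[OF assms(1,3,4,5)])
  obtain b where "b \<in> B" using assms(2) by blast
  then have "m \<le> card X" using assms(3,4,6) card_mono by metis
  moreover have "\<epsilon> * real m < real m" using assms(7,9) by simp
  ultimately show "\<epsilon> * real m < real (card X)" by linarith
qed (use assms(7,8) that in auto)

section \<open>Covering translates in a group\<close>

lemma l_coset_eq_image: "x <#\<^bsub>G\<^esub> A = (\<lambda>a. x \<otimes>\<^bsub>G\<^esub> a) ` A"
  unfolding l_coset_def by auto

lemma r_coset_eq_image: "A #>\<^bsub>G\<^esub> x = (\<lambda>a. a \<otimes>\<^bsub>G\<^esub> x) ` A"
  unfolding r_coset_def by auto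

lemma set_inv_eq_image: "set_inv\<^bsub>G\<^esub> A = (\<lambda>a. inv\<^bsub>G\<^esub> a) ` A"
  unfolding SET_INV_def by auto

lemma set_mult_finite: "finite A \<Longrightarrow> finite B \<Longrightarrow> finite (A <#>\<^bsub>G\<^esub> B)"
  unfolding set_mult_def by auto

lemma set_mult_memI: "h \<in> H \<Longrightarrow> k \<in> K \<Longrightarrow> h \<otimes>\<^bsub>G\<^esub> k \<in> H <#>\<^bsub>G\<^esub> K"
  unfolding set_mult_def by auto

context group
begin

lemma card_l_coset: "x \<in> carrier G \<Longrightarrow> A \<subseteq> carrier G \<Longrightarrow> card (x <# A) = card A"
  unfolding l_coset_eq_image by (intro card_image inj_on_subset[OF inj_on_cmult])

lemma card_r_coset: "x \<in> carrier G \<Longrightarrow> A \<subseteq> carrier G \<Longrightarrow> card (A #> x) = card A"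
  unfolding r_coset_eq_image by (intro card_image inj_on_subset[OF inj_on_multc])

lemma set_dist_l_coset:
  "x \<in> carrier G \<Longrightarrow> U \<subseteq> carrier G \<Longrightarrow> V \<subseteq> carrier G \<Longrightarrow> set_dist (x <# U) (x <# V) = set_dist U V"
  unfolding l_coset_eq_image by (intro set_dist_image inj_on_subset[OF inj_on_cmult]) auto

lemma set_dist_r_coset:
  "x \<in> carrier G \<Longrightarrow> U \<subseteq> carrier G \<Longrightarrow> V \<subseteq> carrier G \<Longrightarrow> set_dist (U #> x) (V #> x) = set_dist U V"
  unfolding r_coset_eq_image by (intro set_dist_image inj_on_subset[OF inj_on_multc]) auto

lemma inv_mult_mem_St_l:
  assumes "x \<in> carrier G" "b \<in> carrier G" "A \<subseteq> carrier G"
    "real (set_dist (x <# A) (b <# A)) \<le> \<epsilon> * real (card A)"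
  shows "inv x \<otimes> b \<in> St_l G \<epsilon> A"
proof -
  have "set_dist ((inv x \<otimes> b) <# A) A = set_dist (inv x <# (b <# A)) (inv x <# (x <# A))"
    using assms(1-3) by (simp add: lcos_m_assoc lcos_mult_one)
  also have "\<dots> = set_dist (x <# A) (b <# A)"
    using assms(1-3) by (simp add: set_dist_l_coset l_coset_subset_G set_dist_commute)
  finally show ?thesis
    using assms unfolding St_l_def set_dist_def[symmetric] by simp
qed

lemma mult_inv_mem_St_r:
  assumes "x \<in> carrier G" "b \<in> carrier G" "A \<subseteq> carrier G"
    "real (set_dist (A #> x) (A #> b)) \<le> \<epsilon> * real (card A)"
  shows "x \<otimes> inv b \<in> St_r G \<epsilon> A"
proof -
  have "set_dist (A #> (x \<otimes> inv b)) A = set_dist ((A #> x) #> inv b) ((A #> b) #> inv b)"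
    using assms(1-3) by (simp add: coset_mult_assoc)
  also have "\<dots> = set_dist (A #> x) (A #> b)"
    using assms(1-3) by (simp add: set_dist_r_coset r_coset_subset_G)
  finally show ?thesis
    using assms unfolding St_r_def set_dist_def[symmetric] by simp
qed

lemma cov_le_St_l:
  assumes "A \<subseteq> carrier G" "B \<subseteq> carrier G" "finite A" "finite B" "A \<noteq> {}" "B \<noteq> {}"
    "0 < \<epsilon>" "\<epsilon> < 1" "VC_l G B A \<le> enat d"
  shows "cov_le G B (St_l G \<epsilon> A) ((30 * real (card (B <#> A)) / (\<epsilon> * real (card A))) ^ d)"
proof -
  have "B <#> A \<subseteq> carrier G" using assms(1,2) by (intro set_mult_closed)
  with assms(9) have "VC_bounded d ((\<lambda>x. x <# A) ` B) (B <#> A)"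
    unfolding VC_l_def by (rule VC_le_imp_VC_bounded)
  moreover have "x <# A \<subseteq> B <#> A" if "x \<in> B" for x
    using that unfolding l_coset_eq_set_mult by (intro mono_set_mult) auto
  moreover have "card (x <# A) = card A" if "x \<in> B" for x
    using that assms(1,2) by (intro card_l_coset) auto
  moreover have "0 < card A" using assms(3,5) by (simp add: card_gt_0_iff)
  ultimately obtain F where F: "F \<subseteq> B" "real (card F) \<le> (30 * real (card (B <#> A)) / (\<epsilon> * real (card A))) ^ d"
    and near: "\<And>b. b \<in> B \<Longrightarrow> \<exists>x\<in>F. real (set_dist (x <# A) (b <# A)) \<le> \<epsilon> * real (card A)"
    using haussler_cover_fraction[of B "B <#> A" "\<lambda>x. x <# A"] assms(3,4,6,7,8) set_mult_finite
    by metis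
  have "b \<in> F <#> St_l G \<epsilon> A" if b: "b \<in> B" for b
  proof -
    obtain x where x: "x \<in> F" "real (set_dist (x <# A) (b <# A)) \<le> \<epsilon> * real (card A)"
      using near[OF b] by blast
    have "x \<in> carrier G" "b \<in> carrier G" using b x(1) F(1) assms(2) by auto
    then have "b = x \<otimes> (inv x \<otimes> b)" by (simp add: m_assoc[symmetric])
    also have "\<dots> \<in> F <#> St_l G \<epsilon> A"
      using x \<open>x \<in> carrier G\<close> \<open>b \<in> carrier G\<close> assms(1) by (intro set_mult_memI inv_mult_mem_St_l)
    finally show ?thesis .
  qed
  then show ?thesis
    unfolding cov_le_def using F assms(4) finite_subset by blast
qed

lemma cov_le_St_r:
  assumes "A \<subseteq> carrier G" "B \<subseteq> carrier G" "finite A" "finite B" "A \<noteq> {}" "B \<noteq> {}"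
    "0 < \<epsilon>" "\<epsilon> < 1" "VC_r G B A \<le> enat d"
  shows "cov_le G (set_inv B) (St_r G \<epsilon> A) ((30 * real (card (A <#> B)) / (\<epsilon> * real (card A))) ^ d)"
proof -
  have "A <#> B \<subseteq> carrier G" using assms(1,2) by (intro set_mult_closed)
  with assms(9) have "VC_bounded d ((\<lambda>x. A #> x) ` B) (A <#> B)"
    unfolding VC_r_def by (rule VC_le_imp_VC_bounded)
  moreover have "A #> x \<subseteq> A <#> B" if "x \<in> B" for x
    using that unfolding r_coset_eq_set_mult by (intro mono_set_mult) auto
  moreover have "card (A #> x) = card A" if "x \<in> B" for x
    using that assms(1,2) by (intro card_r_coset) auto
  moreover have "0 < card A" using assms(3,5) by (simp add: card_gt_0_iff)
  ultimately obtain F where F: "F \<subseteq> B" "real (card F) \<le> (30 * real (card (A <#> B)) / (\<epsilon> * real (card A))) ^ d"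
    and near: "\<And>b. b \<in> B \<Longrightarrow> \<exists>x\<in>F. real (set_dist (A #> x) (A #> b)) \<le> \<epsilon> * real (card A)"
    using haussler_cover_fraction[of B "A <#> B" "\<lambda>x. A #> x"] assms(3,4,6,7,8) set_mult_finite
    by metis
  have "c \<in> set_inv F <#> St_r G \<epsilon> A" if c: "c \<in> set_inv B" for c
  proof -
    obtain b where b: "b \<in> B" "c = inv b" using c unfolding set_inv_eq_image by blast
    obtain x where x: "x \<in> F" "real (set_dist (A #> x) (A #> b)) \<le> \<epsilon> * real (card A)"
      using near[OF b(1)] by blast
    have "x \<in> carrier G" "b \<in> carrier G" using b(1) x(1) F(1) assms(2) by auto
    then have "c = inv x \<otimes> (x \<otimes> inv b)" using b(2) by (simp add: m_assoc[symmetric])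
    also have "\<dots> \<in> set_inv F <#> St_r G \<epsilon> A"
    proof (rule set_mult_memI)
      show "inv x \<in> set_inv F" using x(1) unfolding set_inv_eq_image by blast
      show "x \<otimes> inv b \<in> St_r G \<epsilon> A"
        using \<open>x \<in> carrier G\<close> \<open>b \<in> carrier G\<close> assms(1) x(2) by (rule mult_inv_mem_St_r)
    qed
    finally show ?thesis .
  qed
  moreover have "set_inv F \<subseteq> set_inv B" "finite (set_inv F)" "card (set_inv F) \<le> card F"
    using F(1) finite_subset[OF F(1) assms(4)] unfolding set_inv_eq_image by (auto intro: card_image_le)
  ultimately show ?thesis
    unfolding cov_le_def using F(2) by (intro exI[of _ "set_inv F"]) auto
qed

end

theorem corollary2p11:
  fixes G :: "('a, 'b) monoid_scheme" and A B :: "'a set" and \<epsilon> :: real and d :: nat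
  assumes "group G"
    and "A \<subseteq> carrier G" and "B \<subseteq> carrier G"
    and "finite A" and "finite B" and "A \<noteq> {}" and "B \<noteq> {}"
    and "0 < \<epsilon>" and "\<epsilon> < 1"
  shows "(VC_l G B A \<le> enat d \<longrightarrow>
           cov_le G B (St_l G \<epsilon> A)
             ((30 * real (card (B <#>\<^bsub>G\<^esub> A)) / (\<epsilon> * real (card A))) ^ d))
       \<and> (VC_r G B A \<le> enat d \<longrightarrow>
           cov_le G (set_inv\<^bsub>G\<^esub> B) (St_r G \<epsilon> A)
             ((30 * real (card (A <#>\<^bsub>G\<^esub> B)) / (\<epsilon> * real (card A))) ^ d))"
  using group.cov_le_St_l[OF assms] group.cov_le_St_r[OF assms] by blast

end
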